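(* Let $N,M,r$ be positive integers and let $\xi^{1},\dots,\xi^{M}\in\{-1,+1\}^{N}$ be memory-vectors such that the Hamming distance between any two distinct memory-vectors is at least $\tau N$ for some $\tau>0$. Let $0<\rho<\frac{\tau}{2}$ and suppose $M\le \exp(2N(\tau-2\rho))\frac{1-e^{-2}}{2e^{2}}$. Let $E_{\mathrm{rand}}$ be the compact associative memory energy defined in the context, with FAVOR++ parameter $s\in(0,1)$ and constants $\widehat A,B,D$ as defined there. Fix $l\in\{1,\dots,M\}$, an input $\widehat{\xi}^{l}\in\{-1,+1\}^N$ at Hamming distance at most $\rho N$ from $\xi^l$, and a coordinate $i$; let $\tilde{\xi}^{l}$ be $\widehat{\xi}^{l}$ with its $i$-th coordinate negated and $\Delta(E_{\mathrm{rand}})=E_{\mathrm{rand}}(\tilde{\xi}^{l};\xi^1,\dots,\xi^M)-E_{\mathrm{rand}}(\widehat{\xi}^{l};\xi^1,\dots,\xi^M)$. Then (i) if $\widehat{\xi}^{l}_i=\xi^{l}_i$ then $\mathbb E[\Delta(E_{\mathrm{rand}})]>0$, and if $\widehat{\xi}^{l}_i=-\xi^{l}_i$ then $\mathbb E[\Delta(E_{\mathrm{rand}})]<0$; and (ii) $$\mathrm{Var}(\Delta(E_{\mathrm{rand}}))=\frac1r\big(V_1+V_2-2V_3-V_4-V_5+2V_6\big),$$ where, with all sums over $\mu_1,\mu_2\in\{1,\dots,M\}$, $V_1=\sum\Psi(\xi^{\mu_1}+\xi^{\mu_2}+2\widehat\xi^l)$, $V_2=\sum\Psi(\xi^{\mu_1}+\xi^{\mu_2}+2\tilde\xi^l)$,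 $V_3=\sum\Psi(\xi^{\mu_1}+\xi^{\mu_2}+\widehat\xi^l+\tilde\xi^l)$, $V_4=\sum\exp((\xi^{\mu_1})^\top\widehat\xi^l)\exp((\xi^{\mu_2})^\top\widehat\xi^l)$, $V_5=\sum\exp((\xi^{\mu_1})^\top\tilde\xi^l)\exp((\xi^{\mu_2})^\top\tilde\xi^l)$, $V_6=\sum\exp((\xi^{\mu_1})^\top\widehat\xi^l)\exp((\xi^{\mu_2})^\top\tilde\xi^l)$, and $$\Psi(\mathbf x)=D^{4}\exp(-2N)(1+8\widehat A)^{-N/2}\exp\Big(\frac{B^{2}}{2(1+8\widehat A)}\|\mathbf x\|^{2}\Big).$$
   Context: FAVOR++ random features: fix a parameter $s\in(0,1)$ and set $A=1-\frac{1}{s}$, $\widehat A=-A>0$, $B=\sqrt{1+4\widehat A}$, $C=-\frac12$, $D=(1+4\widehat A)^{N/4}$. For i.i.d. $\omega_1,\dots,\omega_r\sim\mathcal N(0,\mathbf I_N)$ define $\phi_{F++}:\mathbb R^N\to\mathbb R^r$ by $$\phi_{F++}(\mathbf z)=\frac{D}{\sqrt r}\Big(\exp\big(-\widehat A\|\omega_k\|_2^2+B\,\omega_k^\top\mathbf z+C\|\mathbf z\|_2^2\big)\Big)_{k=1}^{r}.$$ The compact associative memory energy of an input $\xi\in\{-1,+1\}^N$ given memories $\xi^1,\dots,\xi^M$ is $$E_{\mathrm{rand}}(\xi;\xi^1,\dots,\xi^M)=\phi_{F++}(\xi)^\top\mathbf M,\qquad \mathbf M=-\sum_{\mu=1}^{M}\phi_{F++}(\xi^{\mu}),$$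 with the same random vectors $\omega_k$ used throughout; expectations and variances are over $\omega_1,\dots,\omega_r$. *)

theory Defs
  imports "HOL-Probability.Probability"
begin

text \<open>Vectors in R^N are represented as functions nat => real; only the
coordinates j < N are relevant.\<close>

definition dotN :: "nat \<Rightarrow> (nat \<Rightarrow> real) \<Rightarrow> (nat \<Rightarrow> real) \<Rightarrow> real" where
  "dotN N x y = (\<Sum>j<N. x j * y j)"

definition sqnormN :: "nat \<Rightarrow> (nat \<Rightarrow> real) \<Rightarrow> real" where
  "sqnormN N x = (\<Sum>j<N. (x j)\<^sup>2)"

definition pm1_vec :: "nat \<Rightarrow> (nat \<Rightarrow> real) \<Rightarrow> bool" where
  "pm1_vec N x \<longleftrightarrow> (\<forall>j<N. x j = 1 \<or> x j = -1)"

definition hamming :: "nat \<Rightarrow> (nat \<Rightarrow> real) \<Rightarrow> (nat \<Rightarrow> real) \<Rightarrow> nat" where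
  "hamming N x y = card {j. j < N \<and> x j \<noteq> y j}"

definition flip_coord :: "nat \<Rightarrow> (nat \<Rightarrow> real) \<Rightarrow> (nat \<Rightarrow> real)" where
  "flip_coord i x = (\<lambda>j. if j = i then - x j else x j)"

definition Ahat :: "real \<Rightarrow> real" where "Ahat s = -(1 - 1 / s)"
definition Bc :: "real \<Rightarrow> real" where "Bc s = sqrt (1 + 4 * Ahat s)"
definition Cc :: real where "Cc = -1/2"
definition Dc :: "real \<Rightarrow> nat \<Rightarrow> real" where "Dc s N = (1 + 4 * Ahat s) powr (real N / 4)"

text \<open>Sample space: omega (k, j) is the j-th coordinate of the k-th random vector
omega_k, for k < r and j < N; all coordinates i.i.d. standard normal.\<close>
definition gauss_space :: "nat \<Rightarrow> nat \<Rightarrow> (nat \<times> nat \<Rightarrow> real) measure" where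
  "gauss_space N r = PiM ({..<r} \<times> {..<N}) (\<lambda>_. std_normal_distribution)"

definition omega_vec :: "(nat \<times> nat \<Rightarrow> real) \<Rightarrow> nat \<Rightarrow> (nat \<Rightarrow> real)" where
  "omega_vec \<omega> k = (\<lambda>j. \<omega> (k, j))"

definition phi_fpp :: "real \<Rightarrow> nat \<Rightarrow> nat \<Rightarrow> (nat \<times> nat \<Rightarrow> real) \<Rightarrow> (nat \<Rightarrow> real) \<Rightarrow> nat \<Rightarrow> real" where
  "phi_fpp s N r \<omega> z k = Dc s N / sqrt (real r) *
     exp (- Ahat s * sqnormN N (omega_vec \<omega> k) + Bc s * dotN N (omega_vec \<omega> k) z + Cc * sqnormN N z)"

definition E_rand :: "real \<Rightarrow> nat \<Rightarrow> nat \<Rightarrow> (nat \<times> nat \<Rightarrow> real) \<Rightarrow> nat \<Rightarrow> (nat \<Rightarrow> nat \<Rightarrow> real)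
    \<Rightarrow> (nat \<Rightarrow> real) \<Rightarrow> real" where
  "E_rand s N r \<omega> M mem x =
     (\<Sum>k<r. phi_fpp s N r \<omega> x k * (- (\<Sum>\<mu>\<in>{1..M}. phi_fpp s N r \<omega> (mem \<mu>) k)))"

definition expect :: "'a measure \<Rightarrow> ('a \<Rightarrow> real) \<Rightarrow> real" where
  "expect W X = integral\<^sup>L W X"

definition var :: "'a measure \<Rightarrow> ('a \<Rightarrow> real) \<Rightarrow> real" where
  "var W X = integral\<^sup>L W (\<lambda>\<omega>. (X \<omega> - expect W X)\<^sup>2)"

definition Psi :: "real \<Rightarrow> nat \<Rightarrow> (nat \<Rightarrow> real) \<Rightarrow> real" where
  "Psi s N x = Dc s N ^ 4 * exp (- 2 * real N) * (1 + 8 * Ahat s) powr (- real N / 2)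
      * exp ((Bc s)\<^sup>2 / (2 * (1 + 8 * Ahat s)) * sqnormN N x)"

end

theory Submission
  imports Defs
begin

(* For g ~ N(0,1) and 1 + 2a > 0, E[exp(-a g^2 + b g)] = (1 + 2a)^(-1/2) exp(b^2 / (2(1 + 2a))).
   Applied coordinatewise, this makes FAVOR++ unbiased on {-1,1}^N, E[phi(x)_k phi(y)_k] = exp(x.y)/r,
   and evaluates the fourth moments: Psi when all four factors use the same random vector omega_k,
   and a product of two pair moments when they use independent ones.

   Hence E[Delta] = sum_mu exp(xi^mu . xh) - exp(xi^mu . xt), with xi^mu . xt = xi^mu . xh - 2 xi^mu_i xh_i.
   Every memory other than xi^l has overlap with xh smaller by at least 2N(tau - 2 rho), so under the
   bound on M the term mu = l dominates the sum and fixes its sign to xi^l_i xh_i.  Delta is the sum of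
   r uncorrelated contributions with equal first and second moments, one per random feature, which
   gives the variance. *)

lemma dotN_commute: "dotN N x y = dotN N y x"
  unfolding dotN_def by (simp add: mult.commute)

lemma dotN_flip_coord:
  assumes "i < N"
  shows "dotN N y (flip_coord i x) = dotN N y x - 2 * y i * x i"
proof -
  have "dotN N y (flip_coord i x) = (\<Sum>j<N. y j * x j - (if j = i then 2 * y i * x i else 0))"
    unfolding dotN_def flip_coord_def by (intro sum.cong) auto
  with assms show ?thesis
    by (simp add: sum_subtractf dotN_def)
qed

lemma pm1_vec_flip_coord: "pm1_vec N x \<Longrightarrow> pm1_vec N (flip_coord i x)"
  unfolding pm1_vec_def flip_coord_def by auto

lemma dotN_pm1_eq_hamming:
  assumes "pm1_vec N x" "pm1_vec N y"
  shows "dotN N x y = real N - 2 * real (hamming N x y)"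
proof -
  have "dotN N x y = (\<Sum>j<N. 1 - (if x j \<noteq> y j then 2 else 0))"
    unfolding dotN_def
  proof (intro sum.cong refl)
    fix j assume "j \<in> {..<N}"
    with assms have "x j \<in> {1, -1}" "y j \<in> {1, -1}"
      unfolding pm1_vec_def by auto
    then show "x j * y j = 1 - (if x j \<noteq> y j then 2 else 0)"
      by auto
  qed
  also have "\<dots> = real N - (\<Sum>j\<in>{j\<in>{..<N}. x j \<noteq> y j}. 2)"
    by (simp add: sum_subtractf sum.inter_filter[symmetric])
  also have "{j\<in>{..<N}. x j \<noteq> y j} = {j. j < N \<and> x j \<noteq> y j}"
    by auto
  finally show ?thesis
    unfolding hamming_def by simp
qed

lemma hamming_commute: "hamming N x y = hamming N y x"
  unfolding hamming_def by metis

lemma hamming_triangle: "hamming N x z \<le> hamming N x y + hamming N y z"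
proof -
  have "{j. j < N \<and> x j \<noteq> z j} \<subseteq> {j. j < N \<and> x j \<noteq> y j} \<union> {j. j < N \<and> y j \<noteq> z j}"
    by auto
  then have "hamming N x z \<le> card ({j. j < N \<and> x j \<noteq> y j} \<union> {j. j < N \<and> y j \<noteq> z j})"
    unfolding hamming_def by (intro card_mono) auto
  also have "\<dots> \<le> hamming N x y + hamming N y z"
    unfolding hamming_def by (rule card_Un_le)
  finally show ?thesis .
qed

lemma sum_sign_dominant_term:
  fixes f :: "'a \<Rightarrow> real"
  assumes "finite A" "l \<in> A"
    and small: "\<And>\<mu>. \<mu> \<in> A - {l} \<Longrightarrow> \<bar>f \<mu>\<bar> \<le> e"
    and dominant: "real (card A - 1) * e < \<bar>f l\<bar>"
  shows "sgn (\<Sum>\<mu>\<in>A. f \<mu>) = sgn (f l)"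
proof -
  have "\<bar>\<Sum>\<mu>\<in>A - {l}. f \<mu>\<bar> \<le> (\<Sum>\<mu>\<in>A - {l}. e)"
    using small by (intro order.trans[OF sum_abs sum_mono]) auto
  also have "\<dots> = real (card A - 1) * e"
    using assms(1,2) by simp
  finally have "\<bar>\<Sum>\<mu>\<in>A - {l}. f \<mu>\<bar> < \<bar>f l\<bar>"
    using dominant by linarith
  moreover have "(\<Sum>\<mu>\<in>A. f \<mu>) = f l + (\<Sum>\<mu>\<in>A - {l}. f \<mu>)"
    using assms(1,2) by (simp add: sum.remove)
  ultimately show ?thesis
    by (auto simp: sgn_if abs_if split: if_splits)
qed

lemma sgn_sum_exp_shift:
  fixes d t :: "'a \<Rightarrow> real"
  assumes "finite A" "l \<in> A"
    and t: "\<And>\<mu>. \<mu> \<in> A \<Longrightarrow> t \<mu> = 1 \<or> t \<mu> = -1"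
    and gap: "\<And>\<mu>. \<mu> \<in> A - {l} \<Longrightarrow> d \<mu> + X \<le> d l"
    and few: "real (card A - 1) * exp 2 < exp X"
  shows "sgn (\<Sum>\<mu>\<in>A. exp (d \<mu>) - exp (d \<mu> - 2 * t \<mu>)) = t l"
proof -
  define f where "f \<mu> = exp (d \<mu>) - exp (d \<mu> - 2 * t \<mu>)" for \<mu>
  have e2: "1 - exp (-2) = (exp 2 - 1) / exp (2::real)"
    by (simp add: exp_minus field_simps)
  have q: "0 < 1 - exp (-2::real)" "1 - exp (-2) \<le> exp 2 - (1::real)"
    unfolding e2 by (simp_all add: divide_le_eq)
  have f_pos: "f \<mu> = exp (d \<mu>) * (1 - exp (-2))" if "t \<mu> = 1" for \<mu>
    using that by (simp add: f_def exp_diff exp_minus field_simps)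
  have f_neg: "f \<mu> = - (exp (d \<mu>) * (exp 2 - 1))" if "t \<mu> = -1" for \<mu>
    using that by (simp add: f_def exp_add field_simps)
  have f_abs: "\<bar>f \<mu>\<bar> \<le> exp (d \<mu>) * (exp 2 - 1)"
    and f_abs_ge: "exp (d \<mu>) * (1 - exp (-2)) \<le> \<bar>f \<mu>\<bar>"
    and f_sgn: "sgn (f \<mu>) = t \<mu>" if "\<mu> \<in> A" for \<mu>
    using t[OF that] f_pos[of \<mu>] f_neg[of \<mu>] q by (auto simp: sgn_mult)
  show ?thesis
    unfolding f_def[symmetric] f_sgn[OF assms(2), symmetric]
  proof (rule sum_sign_dominant_term[OF assms(1,2)])
    fix \<mu> assume \<mu>: "\<mu> \<in> A - {l}"
    have "d \<mu> \<le> d l - X"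
      using gap[OF \<mu>] by linarith
    then have "exp (d \<mu>) * (exp 2 - 1) \<le> exp (d l - X) * (exp 2 - 1)"
      using q by (intro mult_right_mono) auto
    with f_abs[of \<mu>] \<mu> show "\<bar>f \<mu>\<bar> \<le> exp (d l - X) * (exp 2 - 1)"
      by (meson DiffD1 order.trans)
  next
    have "real (card A - 1) * exp (d l - X) < exp (d l) / exp 2"
      using few by (simp add: exp_diff field_simps)
    then have "real (card A - 1) * (exp (d l - X) * (exp 2 - 1)) < exp (d l) / exp 2 * (exp 2 - 1)"
      unfolding mult.assoc[symmetric] by (intro mult_strict_right_mono) auto
    also have "\<dots> = exp (d l) * (1 - exp (-2))"
      unfolding e2 by simp
    also have "\<dots> \<le> \<bar>f l\<bar>"
      using f_abs_ge assms(2) .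
    finally show "real (card A - 1) * (exp (d l - X) * (exp 2 - 1)) < \<bar>f l\<bar>" .
  qed
qed

lemma sgn_sum_exp_dotN_flip_coord:
  fixes mem :: "nat \<Rightarrow> nat \<Rightarrow> real" and \<tau> \<rho> :: real
  assumes mem: "\<forall>\<mu>\<in>{1..M}. pm1_vec N (mem \<mu>)"
    and sep: "\<forall>\<mu>\<in>{1..M}. \<forall>\<nu>\<in>{1..M}. \<mu> \<noteq> \<nu> \<longrightarrow> real (hamming N (mem \<mu>) (mem \<nu>)) \<ge> \<tau> * real N"
    and few: "real M * exp 2 < exp (2 * real N * (\<tau> - 2 * \<rho>))"
    and l: "l \<in> {1..M}"
    and xh: "pm1_vec N xh" "real (hamming N xh (mem l)) \<le> \<rho> * real N"
    and i: "i < N"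
  shows "sgn (\<Sum>\<mu>\<in>{1..M}. exp (dotN N (mem \<mu>) xh) - exp (dotN N (mem \<mu>) (flip_coord i xh)))
    = mem l i * xh i"
proof -
  define d where "d \<mu> = dotN N (mem \<mu>) xh" for \<mu>
  have d_hamming: "d \<mu> = real N - 2 * real (hamming N xh (mem \<mu>))" if "\<mu> \<in> {1..M}" for \<mu>
    unfolding d_def dotN_commute[of N "mem \<mu>"] using dotN_pm1_eq_hamming xh(1) mem that by blast
  have "(\<Sum>\<mu>\<in>{1..M}. exp (dotN N (mem \<mu>) xh) - exp (dotN N (mem \<mu>) (flip_coord i xh)))
      = (\<Sum>\<mu>\<in>{1..M}. exp (d \<mu>) - exp (d \<mu> - 2 * (mem \<mu> i * xh i)))"
    unfolding d_def dotN_flip_coord[OF i] by (simp add: mult.assoc)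
  also have "sgn \<dots> = mem l i * xh i"
  proof (rule sgn_sum_exp_shift[where X = "2 * real N * (\<tau> - 2 * \<rho>)"])
    fix \<mu> assume "\<mu> \<in> {1..M}"
    with mem xh(1) i have "xh i \<in> {1, -1}" "mem \<mu> i \<in> {1, -1}"
      unfolding pm1_vec_def by auto
    then show "mem \<mu> i * xh i = 1 \<or> mem \<mu> i * xh i = -1"
      by auto
  next
    fix \<mu> assume \<mu>: "\<mu> \<in> {1..M} - {l}"
    have "real (hamming N (mem \<mu>) (mem l)) \<ge> \<tau> * real N"
      using sep l \<mu> by blast
    moreover have "hamming N (mem \<mu>) (mem l) \<le> hamming N xh (mem \<mu>) + hamming N xh (mem l)"
      using hamming_triangle[of N "mem \<mu>" "mem l" xh] hamming_commute[of N "mem \<mu>" xh] by linarith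
    ultimately show "d \<mu> + 2 * real N * (\<tau> - 2 * \<rho>) \<le> d l"
      using d_hamming[of \<mu>] d_hamming[OF l] \<mu> xh(2) by (simp add: algebra_simps)
  next
    show "real (card {1..M} - 1) * exp 2 < exp (2 * real N * (\<tau> - 2 * \<rho>))"
    proof -
      have "real (card {1..M} - 1) * exp 2 \<le> real M * exp 2"
        by (intro mult_right_mono) auto
      with few show ?thesis
        by linarith
    qed
  qed (use l in auto)
  finally show ?thesis .
qed

definition std_normal_exp_quad :: "real \<Rightarrow> real \<Rightarrow> real" where
  "std_normal_exp_quad a b = (1 + 2 * a) powr (-1/2) * exp (b\<^sup>2 / (2 * (1 + 2 * a)))"

lemma std_normal_density_mult_exp_quad:
  fixes a b x :: real
  assumes "0 < 1 + 2 * a"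
  shows "std_normal_density x * exp (- a * x\<^sup>2 + b * x) =
    std_normal_exp_quad a b * normal_density (b / (1 + 2 * a)) (1 / sqrt (1 + 2 * a)) x"
proof -
  define c where "c = 1 + 2 * a"
  have c: "c > 0"
    using assms by (simp add: c_def)
  have "- x\<^sup>2 / 2 + (- a * x\<^sup>2 + b * x) = - c * x\<^sup>2 / 2 + b * x"
    by (simp add: c_def field_simps)
  also have "\<dots> = b\<^sup>2 / (2 * c) + (- (x - b / c)\<^sup>2 / (2 * (1 / sqrt c)\<^sup>2))"
    using c by (simp add: field_simps power2_eq_square)
  finally have square: "- x\<^sup>2 / 2 + (- a * x\<^sup>2 + b * x) = \<dots>" .
  have "std_normal_density x * exp (- a * x\<^sup>2 + b * x)
      = 1 / sqrt (2 * pi) * (exp (b\<^sup>2 / (2 * c)) * exp (- (x - b / c)\<^sup>2 / (2 * (1 / sqrt c)\<^sup>2)))"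
    unfolding std_normal_density_def mult.assoc exp_add[symmetric] square ..
  also have "\<dots> = c powr (-1/2) * exp (b\<^sup>2 / (2 * c)) * normal_density (b / c) (1 / sqrt c) x"
    using c by (simp add: normal_density_def powr_minus_divide powr_half_sqrt real_sqrt_mult
        real_sqrt_divide power_divide field_simps)
  finally show ?thesis
    unfolding std_normal_exp_quad_def c_def .
qed

lemma std_normal_exp_quad:
  fixes a b :: real
  assumes "0 < 1 + 2 * a"
  shows "integrable std_normal_distribution (\<lambda>x. exp (- a * x\<^sup>2 + b * x))"
    and "(\<integral>x. exp (- a * x\<^sup>2 + b * x) \<partial>std_normal_distribution) = std_normal_exp_quad a b"
proof -
  have density: "(\<lambda>x. std_normal_density x *\<^sub>R exp (- a * x\<^sup>2 + b * x))
      = (\<lambda>x. std_normal_exp_quad a b * normal_density (b / (1 + 2 * a)) (1 / sqrt (1 + 2 * a)) x)"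
    using std_normal_density_mult_exp_quad[OF assms] by simp
  have "integrable lborel (\<lambda>x. std_normal_density x *\<^sub>R exp (- a * x\<^sup>2 + b * x))"
    unfolding density using assms by simp
  then show "integrable std_normal_distribution (\<lambda>x. exp (- a * x\<^sup>2 + b * x))"
    by (subst integrable_density) auto
  have "(\<integral>x. exp (- a * x\<^sup>2 + b * x) \<partial>std_normal_distribution)
      = (\<integral>x. std_normal_density x *\<^sub>R exp (- a * x\<^sup>2 + b * x) \<partial>lborel)"
    by (subst integral_density) auto
  then show "(\<integral>x. exp (- a * x\<^sup>2 + b * x) \<partial>std_normal_distribution) = std_normal_exp_quad a b"
    unfolding density using assms by simp
qed

lemma PiM_std_normal_exp_quad:
  fixes \<alpha> \<beta> :: "'i \<Rightarrow> real"
  assumes "finite I" "\<And>p. p \<in> I \<Longrightarrow> 0 < 1 + 2 * \<alpha> p"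
  shows "integrable (PiM I (\<lambda>_. std_normal_distribution))
      (\<lambda>\<omega>. exp (\<Sum>p\<in>I. - \<alpha> p * (\<omega> p)\<^sup>2 + \<beta> p * \<omega> p))"
    and "(\<integral>\<omega>. exp (\<Sum>p\<in>I. - \<alpha> p * (\<omega> p)\<^sup>2 + \<beta> p * \<omega> p) \<partial>PiM I (\<lambda>_. std_normal_distribution))
      = (\<Prod>p\<in>I. std_normal_exp_quad (\<alpha> p) (\<beta> p))"
proof -
  interpret product_sigma_finite "\<lambda>_::'i. std_normal_distribution"
    by (simp add: product_sigma_finite_def prob_space_imp_sigma_finite prob_space_normal_density)
  show "integrable (PiM I (\<lambda>_. std_normal_distribution))
      (\<lambda>\<omega>. exp (\<Sum>p\<in>I. - \<alpha> p * (\<omega> p)\<^sup>2 + \<beta> p * \<omega> p))"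
    using product_integrable_prod[OF assms(1), of "\<lambda>p x. exp (- \<alpha> p * x\<^sup>2 + \<beta> p * x)"]
      std_normal_exp_quad(1)[OF assms(2)] by (simp add: exp_sum[OF assms(1)])
  show "(\<integral>\<omega>. exp (\<Sum>p\<in>I. - \<alpha> p * (\<omega> p)\<^sup>2 + \<beta> p * \<omega> p) \<partial>PiM I (\<lambda>_. std_normal_distribution))
      = (\<Prod>p\<in>I. std_normal_exp_quad (\<alpha> p) (\<beta> p))"
    using product_integral_prod[OF assms(1), of "\<lambda>p x. exp (- \<alpha> p * x\<^sup>2 + \<beta> p * x)"]
      std_normal_exp_quad[OF assms(2)] by (simp add: exp_sum[OF assms(1)])
qed

(* gauss_space indexes the r * N Gaussian coordinates by pairs (k, j).  row_coeff k w puts w on row k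
   and zeros elsewhere, so that a quadratic form in the single vector omega_k becomes a coordinatewise
   sum over all pairs, to which PiM_std_normal_exp_quad applies. *)
definition row_coeff :: "nat \<Rightarrow> (nat \<Rightarrow> real) \<Rightarrow> nat \<times> nat \<Rightarrow> real" where
  "row_coeff k w p = (if fst p = k then w (snd p) else 0)"

definition row_form :: "nat \<Rightarrow> nat \<Rightarrow> real \<Rightarrow> (nat \<Rightarrow> real) \<Rightarrow> (nat \<times> nat \<Rightarrow> real) \<Rightarrow> real" where
  "row_form N k c w \<omega> = - c * sqnormN N (omega_vec \<omega> k) + dotN N (omega_vec \<omega> k) w"

lemma row_slice: "k < r \<Longrightarrow> {..<r} \<times> {..<N} \<inter> {p. fst p = k} = Pair k ` {..<N}"
  by auto

lemma sum_row_coeff: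
  assumes "k < r"
  shows "(\<Sum>p\<in>{..<r} \<times> {..<N}. row_coeff k w p * h p) = (\<Sum>j<N. w j * h (k, j))"
proof -
  have "(\<Sum>p\<in>{..<r} \<times> {..<N}. row_coeff k w p * h p)
      = (\<Sum>p\<in>{..<r} \<times> {..<N}. if fst p = k then w (snd p) * h p else 0)"
    by (intro sum.cong) (auto simp: row_coeff_def)
  also have "\<dots> = (\<Sum>p\<in>Pair k ` {..<N}. w (snd p) * h p)"
    by (simp add: sum.If_cases row_slice[OF assms])
  finally show ?thesis
    by (simp add: sum.reindex inj_on_def)
qed

lemma prod_row_coeff:
  assumes "k < r" "g 0 0 = 1"
  shows "(\<Prod>p\<in>{..<r} \<times> {..<N}. g (row_coeff k v p) (row_coeff k w p)) = (\<Prod>j<N. g (v j) (w j))"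
proof -
  have "(\<Prod>p\<in>{..<r} \<times> {..<N}. g (row_coeff k v p) (row_coeff k w p))
      = (\<Prod>p\<in>{..<r} \<times> {..<N}. if fst p = k then g (v (snd p)) (w (snd p)) else 1)"
    using assms(2) by (intro prod.cong) (auto simp: row_coeff_def)
  also have "\<dots> = (\<Prod>p\<in>Pair k ` {..<N}. g (v (snd p)) (w (snd p)))"
    by (simp add: prod.If_cases row_slice[OF assms(1)])
  finally show ?thesis
    by (simp add: prod.reindex inj_on_def)
qed

lemma row_form_eq_sum:
  assumes "k < r"
  shows "row_form N k c w \<omega>
    = (\<Sum>p\<in>{..<r} \<times> {..<N}. - row_coeff k (\<lambda>_. c) p * (\<omega> p)\<^sup>2 + row_coeff k w p * \<omega> p)"
  unfolding sum.distrib sum_row_coeff[OF assms] mult_minus_left sum_negf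
  by (simp add: row_form_def sqnormN_def dotN_def omega_vec_def sum_distrib_left sum_negf mult.commute)

lemma row_form_add:
  "row_form N k c w \<omega> + row_form N k c' w' \<omega> = row_form N k (c + c') (\<lambda>j. w j + w' j) \<omega>"
  unfolding row_form_def dotN_def by (simp add: sum.distrib algebra_simps)


definition std_normal_exp_quad_vec :: "nat \<Rightarrow> real \<Rightarrow> (nat \<Rightarrow> real) \<Rightarrow> real" where
  "std_normal_exp_quad_vec N c w = (1 + 2 * c) powr (- real N / 2) * exp (sqnormN N w / (2 * (1 + 2 * c)))"

lemma prod_std_normal_exp_quad:
  assumes "0 < 1 + 2 * c"
  shows "(\<Prod>j<N. std_normal_exp_quad c (w j)) = std_normal_exp_quad_vec N c w"
  using assms
  by (simp add: std_normal_exp_quad_def std_normal_exp_quad_vec_def prod.distrib exp_sum sqnormN_def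
      sum_divide_distrib powr_realpow[symmetric] powr_powr)

lemma prod_std_normal_exp_quad_row:
  assumes "k < r" "0 < 1 + 2 * c"
  shows "(\<Prod>p\<in>{..<r} \<times> {..<N}. std_normal_exp_quad (row_coeff k (\<lambda>_. c) p) (row_coeff k w p))
    = std_normal_exp_quad_vec N c w"
  using prod_row_coeff[OF assms(1), of std_normal_exp_quad] prod_std_normal_exp_quad[OF assms(2)]
  by (simp add: std_normal_exp_quad_def)

lemma gauss_space_exp_row_form:
  assumes "k < r" "0 < 1 + 2 * c"
  shows "integrable (gauss_space N r) (\<lambda>\<omega>. exp (row_form N k c w \<omega>))"
    and "(\<integral>\<omega>. exp (row_form N k c w \<omega>) \<partial>gauss_space N r) = std_normal_exp_quad_vec N c w"
proof -
  have "0 < 1 + 2 * row_coeff k (\<lambda>_. c) p" for p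
    using assms(2) by (simp add: row_coeff_def)
  note gauss = PiM_std_normal_exp_quad[of "{..<r} \<times> {..<N}", OF _ this]
  show "integrable (gauss_space N r) (\<lambda>\<omega>. exp (row_form N k c w \<omega>))"
    using gauss(1) by (simp add: gauss_space_def row_form_eq_sum[OF assms(1)])
  show "(\<integral>\<omega>. exp (row_form N k c w \<omega>) \<partial>gauss_space N r) = std_normal_exp_quad_vec N c w"
    using gauss(2) by (simp add: gauss_space_def row_form_eq_sum[OF assms(1)]
        prod_std_normal_exp_quad_row[OF assms])
qed

lemma gauss_space_exp_two_row_forms:
  assumes "k < r" "k' < r" "k \<noteq> k'" "0 < 1 + 2 * c" "0 < 1 + 2 * c'"
  shows "integrable (gauss_space N r) (\<lambda>\<omega>. exp (row_form N k c w \<omega> + row_form N k' c' w' \<omega>))"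
    and "(\<integral>\<omega>. exp (row_form N k c w \<omega> + row_form N k' c' w' \<omega>) \<partial>gauss_space N r)
      = std_normal_exp_quad_vec N c w * std_normal_exp_quad_vec N c' w'"
proof -
  define \<alpha> where "\<alpha> p = row_coeff k (\<lambda>_. c) p + row_coeff k' (\<lambda>_. c') p" for p
  define \<beta> where "\<beta> p = row_coeff k w p + row_coeff k' w' p" for p
  have form: "row_form N k c w \<omega> + row_form N k' c' w' \<omega>
      = (\<Sum>p\<in>{..<r} \<times> {..<N}. - \<alpha> p * (\<omega> p)\<^sup>2 + \<beta> p * \<omega> p)" for \<omega>
    unfolding row_form_eq_sum[OF assms(1)] row_form_eq_sum[OF assms(2)] sum.distrib[symmetric]
    by (intro sum.cong) (auto simp: \<alpha>_def \<beta>_def algebra_simps)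
  have "0 < 1 + 2 * \<alpha> p" for p
    using assms(3-5) by (simp add: \<alpha>_def row_coeff_def)
  note gauss = PiM_std_normal_exp_quad[of "{..<r} \<times> {..<N}", OF _ this]
  show "integrable (gauss_space N r) (\<lambda>\<omega>. exp (row_form N k c w \<omega> + row_form N k' c' w' \<omega>))"
    using gauss(1) by (simp add: gauss_space_def form)
  have "(\<Prod>p\<in>{..<r} \<times> {..<N}. std_normal_exp_quad (\<alpha> p) (\<beta> p))
      = (\<Prod>p\<in>{..<r} \<times> {..<N}. std_normal_exp_quad (row_coeff k (\<lambda>_. c) p) (row_coeff k w p))
        * (\<Prod>p\<in>{..<r} \<times> {..<N}. std_normal_exp_quad (row_coeff k' (\<lambda>_. c') p) (row_coeff k' w' p))"
    \<comment> \<open>every coordinate lies in at most one of the rows k, k', and std_normal_exp_quad 0 0 = 1\<close>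
    unfolding prod.distrib[symmetric] using assms(3)
    by (intro prod.cong) (auto simp: \<alpha>_def \<beta>_def row_coeff_def std_normal_exp_quad_def)
  then show "(\<integral>\<omega>. exp (row_form N k c w \<omega> + row_form N k' c' w' \<omega>) \<partial>gauss_space N r)
      = std_normal_exp_quad_vec N c w * std_normal_exp_quad_vec N c' w'"
    using gauss(2) by (simp add: gauss_space_def form prod_std_normal_exp_quad_row assms)
qed

lemma sqnormN_pm1: "pm1_vec N z \<Longrightarrow> sqnormN N z = real N"
  unfolding pm1_vec_def sqnormN_def by (subst sum.cong[OF refl, of _ _ "\<lambda>_. 1"]) auto

lemma sqnormN_add_pm1:
  assumes "pm1_vec N a" "pm1_vec N b"
  shows "sqnormN N (\<lambda>j. a j + b j) = 2 * real N + 2 * dotN N a b"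
proof -
  have "sqnormN N (\<lambda>j. a j + b j) = (\<Sum>j<N. 2 + 2 * (a j * b j))"
    unfolding sqnormN_def
  proof (intro sum.cong refl)
    fix j assume "j \<in> {..<N}"
    with assms have "a j \<in> {1, -1}" "b j \<in> {1, -1}"
      unfolding pm1_vec_def by auto
    then show "(a j + b j)\<^sup>2 = 2 + 2 * (a j * b j)"
      by (auto simp: power2_eq_square)
  qed
  then show ?thesis
    by (simp add: sum.distrib dotN_def sum_distrib_left)
qed

lemma sqnormN_scale: "sqnormN N (\<lambda>j. c * x j) = c\<^sup>2 * sqnormN N x"
  unfolding sqnormN_def by (simp add: sum_distrib_left power_mult_distrib)

lemma Ahat_pos: "0 < s \<Longrightarrow> s < 1 \<Longrightarrow> 0 < Ahat s"
  by (simp add: Ahat_def field_simps)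

lemma Bc_square: "0 < s \<Longrightarrow> s < 1 \<Longrightarrow> (Bc s)\<^sup>2 = 1 + 4 * Ahat s"
  using Ahat_pos[of s] by (simp add: Bc_def)

lemma Dc_square: "0 < s \<Longrightarrow> s < 1 \<Longrightarrow> (Dc s N)\<^sup>2 = (1 + 4 * Ahat s) powr (real N / 2)"
  using Ahat_pos[of s] by (simp add: Dc_def powr_realpow[symmetric] powr_powr)

lemma phi_fpp_pm1:
  assumes "pm1_vec N z"
  shows "phi_fpp s N r \<omega> z k
    = Dc s N / sqrt (real r) * exp (- real N / 2) * exp (row_form N k (Ahat s) (\<lambda>j. Bc s * z j) \<omega>)"
proof -
  have "dotN N (omega_vec \<omega> k) (\<lambda>j. Bc s * z j) = Bc s * dotN N (omega_vec \<omega> k) z"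
    unfolding dotN_def by (simp add: sum_distrib_left algebra_simps)
  then show ?thesis
    by (simp add: phi_fpp_def row_form_def sqnormN_pm1[OF assms] Cc_def exp_add[symmetric] algebra_simps)
qed

lemma phi_fpp_mult_pm1:
  assumes "pm1_vec N a" "pm1_vec N b"
  shows "phi_fpp s N r \<omega> a k * phi_fpp s N r \<omega> b k
    = (Dc s N)\<^sup>2 / real r * exp (- real N) * exp (row_form N k (2 * Ahat s) (\<lambda>j. Bc s * (a j + b j)) \<omega>)"
proof -
  have "exp (- real N / 2) * exp (- real N / 2) = exp (- real N)"
    by (simp flip: exp_add)
  moreover have "exp (row_form N k (Ahat s) (\<lambda>j. Bc s * a j) \<omega>) * exp (row_form N k (Ahat s) (\<lambda>j. Bc s * b j) \<omega>)
      = exp (row_form N k (2 * Ahat s) (\<lambda>j. Bc s * (a j + b j)) \<omega>)"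
    by (simp add: exp_add[symmetric] row_form_add distrib_left)
  ultimately show ?thesis
    unfolding phi_fpp_pm1[OF assms(1)] phi_fpp_pm1[OF assms(2)]
    by (simp add: power2_eq_square field_simps)
qed

lemma favor_pair_identity:
  assumes "0 < s" "s < 1" "pm1_vec N a" "pm1_vec N b"
  shows "(Dc s N)\<^sup>2 * exp (- real N) * std_normal_exp_quad_vec N (2 * Ahat s) (\<lambda>j. Bc s * (a j + b j))
    = exp (dotN N a b)"
proof -
  define c where "c = 1 + 4 * Ahat s"
  have c: "0 < c"
    using Ahat_pos[OF assms(1,2)] by (simp add: c_def)
  have "sqnormN N (\<lambda>j. Bc s * (a j + b j)) / (2 * (1 + 2 * (2 * Ahat s))) = real N + dotN N a b"
    using c unfolding sqnormN_scale sqnormN_add_pm1[OF assms(3,4)] Bc_square[OF assms(1,2)] c_def[symmetric]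
    by (simp add: c_def field_simps)
  then have "std_normal_exp_quad_vec N (2 * Ahat s) (\<lambda>j. Bc s * (a j + b j))
      = c powr (- real N / 2) * exp (real N + dotN N a b)"
    by (simp add: std_normal_exp_quad_vec_def c_def)
  moreover have "c powr (real N / 2) * c powr (- real N / 2) = 1"
    using c by (simp flip: powr_add)
  ultimately show ?thesis
    unfolding Dc_square[OF assms(1,2)] c_def[symmetric] by (simp add: exp_add exp_minus field_simps)
qed

lemma phi_fpp_pair_moment:
  assumes "0 < s" "s < 1" "k < r" "pm1_vec N a" "pm1_vec N b"
  shows "integrable (gauss_space N r) (\<lambda>\<omega>. phi_fpp s N r \<omega> a k * phi_fpp s N r \<omega> b k)"
    and "(\<integral>\<omega>. phi_fpp s N r \<omega> a k * phi_fpp s N r \<omega> b k \<partial>gauss_space N r) = exp (dotN N a b) / real r"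
proof -
  have "0 < 1 + 2 * (2 * Ahat s)"
    using Ahat_pos[OF assms(1,2)] by simp
  note row = gauss_space_exp_row_form[OF assms(3) this, of N "\<lambda>j. Bc s * (a j + b j)"]
  show "integrable (gauss_space N r) (\<lambda>\<omega>. phi_fpp s N r \<omega> a k * phi_fpp s N r \<omega> b k)"
    unfolding phi_fpp_mult_pm1[OF assms(4,5)] using row(1) by simp
  show "(\<integral>\<omega>. phi_fpp s N r \<omega> a k * phi_fpp s N r \<omega> b k \<partial>gauss_space N r) = exp (dotN N a b) / real r"
    unfolding phi_fpp_mult_pm1[OF assms(4,5)] using row(2) favor_pair_identity[OF assms(1,2,4,5)]
    by (simp add: field_simps)
qed

lemma phi_fpp_quad_moment_same_row:
  assumes "0 < s" "s < 1" "k < r" "pm1_vec N a" "pm1_vec N b" "pm1_vec N c" "pm1_vec N d"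
  shows "integrable (gauss_space N r)
      (\<lambda>\<omega>. (phi_fpp s N r \<omega> a k * phi_fpp s N r \<omega> b k) * (phi_fpp s N r \<omega> c k * phi_fpp s N r \<omega> d k))"
    and "(\<integral>\<omega>. (phi_fpp s N r \<omega> a k * phi_fpp s N r \<omega> b k) * (phi_fpp s N r \<omega> c k * phi_fpp s N r \<omega> d k)
        \<partial>gauss_space N r) = Psi s N (\<lambda>j. a j + b j + c j + d j) / (real r)\<^sup>2"
proof -
  define K where "K = (Dc s N)\<^sup>2 / real r * exp (- real N)"
  have prod: "(phi_fpp s N r \<omega> a k * phi_fpp s N r \<omega> b k) * (phi_fpp s N r \<omega> c k * phi_fpp s N r \<omega> d k)
      = K\<^sup>2 * exp (row_form N k (4 * Ahat s) (\<lambda>j. Bc s * (a j + b j + c j + d j)) \<omega>)" for \<omega>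
    unfolding phi_fpp_mult_pm1[OF assms(4,5)] phi_fpp_mult_pm1[OF assms(6,7)] K_def[symmetric]
    by (simp add: power2_eq_square exp_add[symmetric] row_form_add algebra_simps)
  have "0 < 1 + 2 * (4 * Ahat s)"
    using Ahat_pos[OF assms(1,2)] by simp
  note row = gauss_space_exp_row_form[OF assms(3) this, of N "\<lambda>j. Bc s * (a j + b j + c j + d j)"]
  show "integrable (gauss_space N r)
      (\<lambda>\<omega>. (phi_fpp s N r \<omega> a k * phi_fpp s N r \<omega> b k) * (phi_fpp s N r \<omega> c k * phi_fpp s N r \<omega> d k))"
    unfolding prod using row(1) by simp
  have "K\<^sup>2 = (Dc s N)^4 * exp (- 2 * real N) / (real r)\<^sup>2"
    by (simp add: K_def power_divide power_mult_distrib exp_of_nat_mult[symmetric] flip: power_mult exp_add)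
  then show "(\<integral>\<omega>. (phi_fpp s N r \<omega> a k * phi_fpp s N r \<omega> b k) * (phi_fpp s N r \<omega> c k * phi_fpp s N r \<omega> d k)
        \<partial>gauss_space N r) = Psi s N (\<lambda>j. a j + b j + c j + d j) / (real r)\<^sup>2"
    unfolding prod using row(2)
    by (simp add: Psi_def std_normal_exp_quad_vec_def sqnormN_scale)
qed

lemma phi_fpp_quad_moment_distinct_rows:
  assumes "0 < s" "s < 1" "k < r" "k' < r" "k \<noteq> k'"
    and "pm1_vec N a" "pm1_vec N b" "pm1_vec N c" "pm1_vec N d"
  shows "integrable (gauss_space N r)
      (\<lambda>\<omega>. (phi_fpp s N r \<omega> a k * phi_fpp s N r \<omega> b k) * (phi_fpp s N r \<omega> c k' * phi_fpp s N r \<omega> d k'))"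
    and "(\<integral>\<omega>. (phi_fpp s N r \<omega> a k * phi_fpp s N r \<omega> b k) * (phi_fpp s N r \<omega> c k' * phi_fpp s N r \<omega> d k')
        \<partial>gauss_space N r) = exp (dotN N a b) * exp (dotN N c d) / (real r)\<^sup>2"
proof -
  define K where "K = (Dc s N)\<^sup>2 / real r * exp (- real N)"
  define v where "v = (\<lambda>j. Bc s * (a j + b j))"
  define v' where "v' = (\<lambda>j. Bc s * (c j + d j))"
  have prod: "(phi_fpp s N r \<omega> a k * phi_fpp s N r \<omega> b k) * (phi_fpp s N r \<omega> c k' * phi_fpp s N r \<omega> d k')
      = K\<^sup>2 * exp (row_form N k (2 * Ahat s) v \<omega> + row_form N k' (2 * Ahat s) v' \<omega>)" for \<omega>
    unfolding phi_fpp_mult_pm1[OF assms(6,7)] phi_fpp_mult_pm1[OF assms(8,9)] K_def[symmetric] v_def v'_def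
    by (simp add: power2_eq_square exp_add)
  have "0 < 1 + 2 * (2 * Ahat s)"
    using Ahat_pos[OF assms(1,2)] by simp
  note rows = gauss_space_exp_two_row_forms[OF assms(3-5) this this, of N v v']
  show "integrable (gauss_space N r)
      (\<lambda>\<omega>. (phi_fpp s N r \<omega> a k * phi_fpp s N r \<omega> b k) * (phi_fpp s N r \<omega> c k' * phi_fpp s N r \<omega> d k'))"
    unfolding prod using rows(1) by simp
  have "K * std_normal_exp_quad_vec N (2 * Ahat s) v = exp (dotN N a b) / real r"
    "K * std_normal_exp_quad_vec N (2 * Ahat s) v' = exp (dotN N c d) / real r"
    using favor_pair_identity[OF assms(1,2,6,7)] favor_pair_identity[OF assms(1,2,8,9)]
    unfolding K_def v_def v'_def by (simp_all add: field_simps)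
  then have "K\<^sup>2 * (std_normal_exp_quad_vec N (2 * Ahat s) v * std_normal_exp_quad_vec N (2 * Ahat s) v')
      = exp (dotN N a b) * exp (dotN N c d) / (real r)\<^sup>2"
    by (metis (no_types, lifting) mult.assoc mult.left_commute power2_eq_square times_divide_times_eq)
  then show "(\<integral>\<omega>. (phi_fpp s N r \<omega> a k * phi_fpp s N r \<omega> b k) * (phi_fpp s N r \<omega> c k' * phi_fpp s N r \<omega> d k')
        \<partial>gauss_space N r) = exp (dotN N a b) * exp (dotN N c d) / (real r)\<^sup>2"
    unfolding prod using rows(2) by simp
qed

lemma var_sum_uncorrelated:
  fixes Y :: "'i \<Rightarrow> 'a \<Rightarrow> real"
  assumes "prob_space P" "finite K"
    and int: "\<And>k. k \<in> K \<Longrightarrow> integrable P (Y k)"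
    and int2: "\<And>k k'. k \<in> K \<Longrightarrow> k' \<in> K \<Longrightarrow> integrable P (\<lambda>\<omega>. Y k \<omega> * Y k' \<omega>)"
    and mean: "\<And>k. k \<in> K \<Longrightarrow> expect P (Y k) = m"
    and moment2: "\<And>k k'. k \<in> K \<Longrightarrow> k' \<in> K \<Longrightarrow>
      expect P (\<lambda>\<omega>. Y k \<omega> * Y k' \<omega>) = (if k = k' then q else m\<^sup>2)"
  shows "var P (\<lambda>\<omega>. \<Sum>k\<in>K. Y k \<omega>) = real (card K) * (q - m\<^sup>2)"
proof -
  interpret prob_space P by fact
  have square: "(\<Sum>k\<in>K. Y k \<omega>)\<^sup>2 = (\<Sum>k\<in>K. \<Sum>k'\<in>K. Y k \<omega> * Y k' \<omega>)" for \<omega>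
    by (simp add: power2_eq_square sum_product)
  have "expect P (\<lambda>\<omega>. \<Sum>k\<in>K. Y k \<omega>) = real (card K) * m"
    using int mean by (simp add: expect_def Bochner_Integration.integral_sum)
  moreover have "expect P (\<lambda>\<omega>. (\<Sum>k\<in>K. Y k \<omega>)\<^sup>2)
      = (\<Sum>k\<in>K. \<Sum>k'\<in>K. if k = k' then q else m\<^sup>2)"
    unfolding square using int2 moment2
    by (simp add: expect_def Bochner_Integration.integral_sum Bochner_Integration.integrable_sum)
  moreover have "\<dots> = (\<Sum>k\<in>K. \<Sum>k'\<in>K. m\<^sup>2 + (if k = k' then q - m\<^sup>2 else 0))"
    by (intro sum.cong) auto
  moreover have "\<dots> = (real (card K) * m)\<^sup>2 + real (card K) * (q - m\<^sup>2)"
    using assms(2) by (simp add: sum.distrib power2_eq_square algebra_simps)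
  ultimately show ?thesis
    using variance_eq[of "\<lambda>\<omega>. \<Sum>k\<in>K. Y k \<omega>"] int int2
    by (simp add: var_def expect_def square Bochner_Integration.integrable_sum)
qed

lemma integral_diff_mult_diff:
  fixes f g u v :: "'a \<Rightarrow> real"
  assumes "integrable M (\<lambda>\<omega>. f \<omega> * u \<omega>)" "integrable M (\<lambda>\<omega>. f \<omega> * v \<omega>)"
    "integrable M (\<lambda>\<omega>. g \<omega> * u \<omega>)" "integrable M (\<lambda>\<omega>. g \<omega> * v \<omega>)"
  shows "integrable M (\<lambda>\<omega>. (f \<omega> - g \<omega>) * (u \<omega> - v \<omega>))"
    and "(\<integral>\<omega>. (f \<omega> - g \<omega>) * (u \<omega> - v \<omega>) \<partial>M)
      = (\<integral>\<omega>. f \<omega> * u \<omega> \<partial>M) - (\<integral>\<omega>. f \<omega> * v \<omega> \<partial>M)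
        - (\<integral>\<omega>. g \<omega> * u \<omega> \<partial>M) + (\<integral>\<omega>. g \<omega> * v \<omega> \<partial>M)"
proof -
  have expand: "(\<lambda>\<omega>. (f \<omega> - g \<omega>) * (u \<omega> - v \<omega>))
      = (\<lambda>\<omega>. f \<omega> * u \<omega> - f \<omega> * v \<omega> - g \<omega> * u \<omega> + g \<omega> * v \<omega>)"
    by (simp add: algebra_simps)
  show "integrable M (\<lambda>\<omega>. (f \<omega> - g \<omega>) * (u \<omega> - v \<omega>))"
    unfolding expand using assms by simp
  show "(\<integral>\<omega>. (f \<omega> - g \<omega>) * (u \<omega> - v \<omega>) \<partial>M)
      = (\<integral>\<omega>. f \<omega> * u \<omega> \<partial>M) - (\<integral>\<omega>. f \<omega> * v \<omega> \<partial>M)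
        - (\<integral>\<omega>. g \<omega> * u \<omega> \<partial>M) + (\<integral>\<omega>. g \<omega> * v \<omega> \<partial>M)"
    unfolding expand using assms by simp
qed

lemma square_sum_diff:
  fixes a b :: "'i \<Rightarrow> real"
  shows "(\<Sum>\<mu>\<in>A. a \<mu> - b \<mu>)\<^sup>2
    = (\<Sum>\<mu>1\<in>A. \<Sum>\<mu>2\<in>A. a \<mu>1 * a \<mu>2) + (\<Sum>\<mu>1\<in>A. \<Sum>\<mu>2\<in>A. b \<mu>1 * b \<mu>2)
      - 2 * (\<Sum>\<mu>1\<in>A. \<Sum>\<mu>2\<in>A. a \<mu>1 * b \<mu>2)"
proof -
  have "(\<Sum>\<mu>1\<in>A. \<Sum>\<mu>2\<in>A. b \<mu>1 * a \<mu>2) = (\<Sum>\<mu>1\<in>A. \<Sum>\<mu>2\<in>A. a \<mu>1 * b \<mu>2)"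
    by (subst sum.swap) (simp add: mult.commute)
  then show ?thesis
    by (simp add: power2_eq_square sum_product sum_subtractf algebra_simps)
qed

lemma E_rand_diff:
  "E_rand s N r \<omega> M mem y - E_rand s N r \<omega> M mem x
    = (\<Sum>k<r. \<Sum>\<mu>\<in>{1..M}. phi_fpp s N r \<omega> (mem \<mu>) k * phi_fpp s N r \<omega> x k
                         - phi_fpp s N r \<omega> (mem \<mu>) k * phi_fpp s N r \<omega> y k)"
  unfolding E_rand_def sum_subtractf[symmetric]
  by (intro sum.cong) (simp_all add: sum_subtractf sum_distrib_left sum_distrib_right algebra_simps)

context
  fixes s :: real and N r M :: nat and mem :: "nat \<Rightarrow> nat \<Rightarrow> real" and x y :: "nat \<Rightarrow> real"
begin

definition gap_term :: "nat \<Rightarrow> nat \<Rightarrow> (nat \<times> nat \<Rightarrow> real) \<Rightarrow> real" where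
  "gap_term k \<mu> \<omega> = phi_fpp s N r \<omega> (mem \<mu>) k * phi_fpp s N r \<omega> x k
    - phi_fpp s N r \<omega> (mem \<mu>) k * phi_fpp s N r \<omega> y k"

definition mean_gap :: real where
  "mean_gap = (\<Sum>\<mu>\<in>{1..M}. exp (dotN N (mem \<mu>) x) - exp (dotN N (mem \<mu>) y))"

definition same_row_gap_moment :: real where
  "same_row_gap_moment = (\<Sum>\<mu>1\<in>{1..M}. \<Sum>\<mu>2\<in>{1..M}.
     Psi s N (\<lambda>j. mem \<mu>1 j + mem \<mu>2 j + 2 * x j) + Psi s N (\<lambda>j. mem \<mu>1 j + mem \<mu>2 j + 2 * y j)
     - 2 * Psi s N (\<lambda>j. mem \<mu>1 j + mem \<mu>2 j + x j + y j))"

lemma same_row_gap_moment_minus_mean_gap_square: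
  "same_row_gap_moment - mean_gap\<^sup>2
    = (\<Sum>\<mu>1\<in>{1..M}. \<Sum>\<mu>2\<in>{1..M}. Psi s N (\<lambda>j. mem \<mu>1 j + mem \<mu>2 j + 2 * x j))
    + (\<Sum>\<mu>1\<in>{1..M}. \<Sum>\<mu>2\<in>{1..M}. Psi s N (\<lambda>j. mem \<mu>1 j + mem \<mu>2 j + 2 * y j))
    - 2 * (\<Sum>\<mu>1\<in>{1..M}. \<Sum>\<mu>2\<in>{1..M}. Psi s N (\<lambda>j. mem \<mu>1 j + mem \<mu>2 j + x j + y j))
    - (\<Sum>\<mu>1\<in>{1..M}. \<Sum>\<mu>2\<in>{1..M}. exp (dotN N (mem \<mu>1) x) * exp (dotN N (mem \<mu>2) x))
    - (\<Sum>\<mu>1\<in>{1..M}. \<Sum>\<mu>2\<in>{1..M}. exp (dotN N (mem \<mu>1) y) * exp (dotN N (mem \<mu>2) y))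
    + 2 * (\<Sum>\<mu>1\<in>{1..M}. \<Sum>\<mu>2\<in>{1..M}. exp (dotN N (mem \<mu>1) x) * exp (dotN N (mem \<mu>2) y))"
  unfolding same_row_gap_moment_def mean_gap_def square_sum_diff
  by (simp add: sum.distrib sum_subtractf sum_distrib_left)

context
  assumes s: "0 < s" "s < 1"
    and mem: "\<forall>\<mu>\<in>{1..M}. pm1_vec N (mem \<mu>)"
    and x: "pm1_vec N x" and y: "pm1_vec N y"
begin

lemma gap_term_mean:
  assumes "k < r" "\<mu> \<in> {1..M}"
  shows "integrable (gauss_space N r) (gap_term k \<mu>)"
    and "expect (gauss_space N r) (gap_term k \<mu>)
      = (exp (dotN N (mem \<mu>) x) - exp (dotN N (mem \<mu>) y)) / real r"
proof -
  have "pm1_vec N (mem \<mu>)"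
    using mem assms(2) by blast
  note mx = phi_fpp_pair_moment[OF s assms(1) this x] and my = phi_fpp_pair_moment[OF s assms(1) this y]
  show "integrable (gauss_space N r) (gap_term k \<mu>)"
    unfolding gap_term_def[abs_def] using mx(1) my(1) by simp
  show "expect (gauss_space N r) (gap_term k \<mu>)
      = (exp (dotN N (mem \<mu>) x) - exp (dotN N (mem \<mu>) y)) / real r"
    unfolding gap_term_def[abs_def] expect_def using mx my by (simp add: diff_divide_distrib)
qed

lemma gap_term_mult_same_row:
  assumes "k < r" "\<mu>1 \<in> {1..M}" "\<mu>2 \<in> {1..M}"
  shows "integrable (gauss_space N r) (\<lambda>\<omega>. gap_term k \<mu>1 \<omega> * gap_term k \<mu>2 \<omega>)"
    and "expect (gauss_space N r) (\<lambda>\<omega>. gap_term k \<mu>1 \<omega> * gap_term k \<mu>2 \<omega>)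
      = (Psi s N (\<lambda>j. mem \<mu>1 j + mem \<mu>2 j + 2 * x j) + Psi s N (\<lambda>j. mem \<mu>1 j + mem \<mu>2 j + 2 * y j)
         - 2 * Psi s N (\<lambda>j. mem \<mu>1 j + mem \<mu>2 j + x j + y j)) / (real r)\<^sup>2"
proof -
  have m: "pm1_vec N (mem \<mu>1)" "pm1_vec N (mem \<mu>2)"
    using mem assms(2,3) by blast+
  note moments = phi_fpp_quad_moment_same_row[OF s assms(1) m(1) x m(2) x]
    phi_fpp_quad_moment_same_row[OF s assms(1) m(1) x m(2) y]
    phi_fpp_quad_moment_same_row[OF s assms(1) m(1) y m(2) x]
    phi_fpp_quad_moment_same_row[OF s assms(1) m(1) y m(2) y]
  note expand = integral_diff_mult_diff[where M = "gauss_space N r"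
      and f = "\<lambda>\<omega>. phi_fpp s N r \<omega> (mem \<mu>1) k * phi_fpp s N r \<omega> x k"
      and g = "\<lambda>\<omega>. phi_fpp s N r \<omega> (mem \<mu>1) k * phi_fpp s N r \<omega> y k"
      and u = "\<lambda>\<omega>. phi_fpp s N r \<omega> (mem \<mu>2) k * phi_fpp s N r \<omega> x k"
      and v = "\<lambda>\<omega>. phi_fpp s N r \<omega> (mem \<mu>2) k * phi_fpp s N r \<omega> y k"]
  show "integrable (gauss_space N r) (\<lambda>\<omega>. gap_term k \<mu>1 \<omega> * gap_term k \<mu>2 \<omega>)"
    unfolding gap_term_def using expand(1) moments by blast
  have "Psi s N (\<lambda>j. mem \<mu>1 j + x j + mem \<mu>2 j + y j) = Psi s N (\<lambda>j. mem \<mu>1 j + mem \<mu>2 j + x j + y j)"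
    "Psi s N (\<lambda>j. mem \<mu>1 j + y j + mem \<mu>2 j + x j) = Psi s N (\<lambda>j. mem \<mu>1 j + mem \<mu>2 j + x j + y j)"
    "Psi s N (\<lambda>j. mem \<mu>1 j + x j + mem \<mu>2 j + x j) = Psi s N (\<lambda>j. mem \<mu>1 j + mem \<mu>2 j + 2 * x j)"
    "Psi s N (\<lambda>j. mem \<mu>1 j + y j + mem \<mu>2 j + y j) = Psi s N (\<lambda>j. mem \<mu>1 j + mem \<mu>2 j + 2 * y j)"
    by (simp_all add: algebra_simps)
  with expand(2) moments show "expect (gauss_space N r) (\<lambda>\<omega>. gap_term k \<mu>1 \<omega> * gap_term k \<mu>2 \<omega>)
      = (Psi s N (\<lambda>j. mem \<mu>1 j + mem \<mu>2 j + 2 * x j) + Psi s N (\<lambda>j. mem \<mu>1 j + mem \<mu>2 j + 2 * y j)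
         - 2 * Psi s N (\<lambda>j. mem \<mu>1 j + mem \<mu>2 j + x j + y j)) / (real r)\<^sup>2"
    unfolding gap_term_def expect_def by (simp add: diff_divide_distrib add_divide_distrib)
qed


lemma gap_term_mult_distinct_rows:
  assumes "k < r" "k' < r" "k \<noteq> k'" "\<mu>1 \<in> {1..M}" "\<mu>2 \<in> {1..M}"
  shows "integrable (gauss_space N r) (\<lambda>\<omega>. gap_term k \<mu>1 \<omega> * gap_term k' \<mu>2 \<omega>)"
    and "expect (gauss_space N r) (\<lambda>\<omega>. gap_term k \<mu>1 \<omega> * gap_term k' \<mu>2 \<omega>)
      = (exp (dotN N (mem \<mu>1) x) - exp (dotN N (mem \<mu>1) y))
        * (exp (dotN N (mem \<mu>2) x) - exp (dotN N (mem \<mu>2) y)) / (real r)\<^sup>2"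
proof -
  have m: "pm1_vec N (mem \<mu>1)" "pm1_vec N (mem \<mu>2)"
    using mem assms(4,5) by blast+
  note moments = phi_fpp_quad_moment_distinct_rows[OF s assms(1-3) m(1) x m(2) x]
    phi_fpp_quad_moment_distinct_rows[OF s assms(1-3) m(1) x m(2) y]
    phi_fpp_quad_moment_distinct_rows[OF s assms(1-3) m(1) y m(2) x]
    phi_fpp_quad_moment_distinct_rows[OF s assms(1-3) m(1) y m(2) y]
  note expand = integral_diff_mult_diff[where M = "gauss_space N r"
      and f = "\<lambda>\<omega>. phi_fpp s N r \<omega> (mem \<mu>1) k * phi_fpp s N r \<omega> x k"
      and g = "\<lambda>\<omega>. phi_fpp s N r \<omega> (mem \<mu>1) k * phi_fpp s N r \<omega> y k"
      and u = "\<lambda>\<omega>. phi_fpp s N r \<omega> (mem \<mu>2) k' * phi_fpp s N r \<omega> x k'"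
      and v = "\<lambda>\<omega>. phi_fpp s N r \<omega> (mem \<mu>2) k' * phi_fpp s N r \<omega> y k'"]
  show "integrable (gauss_space N r) (\<lambda>\<omega>. gap_term k \<mu>1 \<omega> * gap_term k' \<mu>2 \<omega>)"
    unfolding gap_term_def using expand(1) moments by blast
  show "expect (gauss_space N r) (\<lambda>\<omega>. gap_term k \<mu>1 \<omega> * gap_term k' \<mu>2 \<omega>)
      = (exp (dotN N (mem \<mu>1) x) - exp (dotN N (mem \<mu>1) y))
        * (exp (dotN N (mem \<mu>2) x) - exp (dotN N (mem \<mu>2) y)) / (real r)\<^sup>2"
    unfolding gap_term_def expect_def using expand(2) moments
    by (simp add: diff_divide_distrib add_divide_distrib algebra_simps)
qed

lemma row_gap_moments:
  assumes "k < r" "k' < r"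
  shows "integrable (gauss_space N r) (\<lambda>\<omega>. \<Sum>\<mu>\<in>{1..M}. gap_term k \<mu> \<omega>)"
    and "expect (gauss_space N r) (\<lambda>\<omega>. \<Sum>\<mu>\<in>{1..M}. gap_term k \<mu> \<omega>) = mean_gap / real r"
    and "integrable (gauss_space N r)
      (\<lambda>\<omega>. (\<Sum>\<mu>\<in>{1..M}. gap_term k \<mu> \<omega>) * (\<Sum>\<mu>\<in>{1..M}. gap_term k' \<mu> \<omega>))"
    and "expect (gauss_space N r)
      (\<lambda>\<omega>. (\<Sum>\<mu>\<in>{1..M}. gap_term k \<mu> \<omega>) * (\<Sum>\<mu>\<in>{1..M}. gap_term k' \<mu> \<omega>))
      = (if k = k' then same_row_gap_moment / (real r)\<^sup>2 else (mean_gap / real r)\<^sup>2)"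
proof -
  have product: "(\<Sum>\<mu>\<in>{1..M}. gap_term k \<mu> \<omega>) * (\<Sum>\<mu>\<in>{1..M}. gap_term k' \<mu> \<omega>)
      = (\<Sum>\<mu>1\<in>{1..M}. \<Sum>\<mu>2\<in>{1..M}. gap_term k \<mu>1 \<omega> * gap_term k' \<mu>2 \<omega>)" for \<omega>
    by (rule sum_product)
  have int2: "integrable (gauss_space N r) (\<lambda>\<omega>. gap_term k \<mu>1 \<omega> * gap_term k' \<mu>2 \<omega>)"
    if "\<mu>1 \<in> {1..M}" "\<mu>2 \<in> {1..M}" for \<mu>1 \<mu>2
    using gap_term_mult_same_row(1)[OF assms(1) that] gap_term_mult_distinct_rows(1)[OF assms _ that]
    by (cases "k = k'") auto
  show "integrable (gauss_space N r) (\<lambda>\<omega>. \<Sum>\<mu>\<in>{1..M}. gap_term k \<mu> \<omega>)"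
    by (rule Bochner_Integration.integrable_sum) (rule gap_term_mean(1)[OF assms(1)])
  show "expect (gauss_space N r) (\<lambda>\<omega>. \<Sum>\<mu>\<in>{1..M}. gap_term k \<mu> \<omega>) = mean_gap / real r"
    using gap_term_mean[OF assms(1)]
    by (simp add: expect_def Bochner_Integration.integral_sum mean_gap_def sum_divide_distrib)
  show "integrable (gauss_space N r)
      (\<lambda>\<omega>. (\<Sum>\<mu>\<in>{1..M}. gap_term k \<mu> \<omega>) * (\<Sum>\<mu>\<in>{1..M}. gap_term k' \<mu> \<omega>))"
    unfolding product by (intro Bochner_Integration.integrable_sum int2)
  have "expect (gauss_space N r)
      (\<lambda>\<omega>. (\<Sum>\<mu>\<in>{1..M}. gap_term k \<mu> \<omega>) * (\<Sum>\<mu>\<in>{1..M}. gap_term k' \<mu> \<omega>))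
      = (\<Sum>\<mu>1\<in>{1..M}. \<Sum>\<mu>2\<in>{1..M}. expect (gauss_space N r) (\<lambda>\<omega>. gap_term k \<mu>1 \<omega> * gap_term k' \<mu>2 \<omega>))"
    unfolding product expect_def
    by (subst Bochner_Integration.integral_sum)
      (intro sum.cong refl Bochner_Integration.integral_sum Bochner_Integration.integrable_sum int2; assumption)+
  also have "\<dots> = (if k = k' then same_row_gap_moment / (real r)\<^sup>2 else (mean_gap / real r)\<^sup>2)"
    using gap_term_mult_same_row(2)[OF assms(1)] gap_term_mult_distinct_rows(2)[OF assms]
    by (cases "k = k'") (simp_all add: same_row_gap_moment_def mean_gap_def sum_divide_distrib power_divide
        power2_eq_square sum_product)
  finally show "expect (gauss_space N r)
      (\<lambda>\<omega>. (\<Sum>\<mu>\<in>{1..M}. gap_term k \<mu> \<omega>) * (\<Sum>\<mu>\<in>{1..M}. gap_term k' \<mu> \<omega>))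
      = (if k = k' then same_row_gap_moment / (real r)\<^sup>2 else (mean_gap / real r)\<^sup>2)" .
qed

lemma energy_gap_mean:
  assumes "0 < r"
  shows "expect (gauss_space N r) (\<lambda>\<omega>. \<Sum>k<r. \<Sum>\<mu>\<in>{1..M}. gap_term k \<mu> \<omega>) = mean_gap"
  using row_gap_moments(1,2) assms by (simp add: expect_def Bochner_Integration.integral_sum)

lemma energy_gap_var:
  "var (gauss_space N r) (\<lambda>\<omega>. \<Sum>k<r. \<Sum>\<mu>\<in>{1..M}. gap_term k \<mu> \<omega>)
    = (same_row_gap_moment - mean_gap\<^sup>2) / real r"
proof -
  have "prob_space (gauss_space N r)"
    unfolding gauss_space_def by (simp add: prob_space_PiM prob_space_normal_density)
  then have "var (gauss_space N r) (\<lambda>\<omega>. \<Sum>k<r. \<Sum>\<mu>\<in>{1..M}. gap_term k \<mu> \<omega>)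
      = real (card {..<r}) * (same_row_gap_moment / (real r)\<^sup>2 - (mean_gap / real r)\<^sup>2)"
    by (rule var_sum_uncorrelated) (simp_all only: lessThan_iff finite_lessThan row_gap_moments)
  also have "\<dots> = (same_row_gap_moment - mean_gap\<^sup>2) / real r"
    by (simp add: power_divide diff_divide_distrib[symmetric] power2_eq_square)
  finally show "var (gauss_space N r) (\<lambda>\<omega>. \<Sum>k<r. \<Sum>\<mu>\<in>{1..M}. gap_term k \<mu> \<omega>)
      = (same_row_gap_moment - mean_gap\<^sup>2) / real r" .
qed

end

end

lemma capacity_bound_strict:
  assumes "real M \<le> exp X * (1 - exp (-2)) / (2 * exp 2)"
  shows "real M * exp 2 < exp X"
proof -
  have "(1 - exp (-2)) / 2 < (1::real)"
    using exp_gt_zero[of "-2"] by (simp add: field_simps del: exp_gt_zero)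
  then have "exp X * ((1 - exp (-2)) / 2) < exp X"
    by simp
  moreover have "real M * exp 2 \<le> exp X * ((1 - exp (-2)) / 2)"
    using assms by (simp add: field_simps)
  ultimately show ?thesis
    by linarith
qed

theorem theorem2:
  fixes N M r l i :: nat and \<tau> \<rho> s :: real
    and mem :: "nat \<Rightarrow> nat \<Rightarrow> real" and xh :: "nat \<Rightarrow> real"
  assumes "N > 0" and "M > 0" and "r > 0"
    and "\<forall>\<mu>\<in>{1..M}. pm1_vec N (mem \<mu>)"
    and "\<tau> > 0"
    and "\<forall>\<mu>\<in>{1..M}. \<forall>\<nu>\<in>{1..M}. \<mu> \<noteq> \<nu> \<longrightarrow> real (hamming N (mem \<mu>) (mem \<nu>)) \<ge> \<tau> * real N"
    and "0 < \<rho>" and "\<rho> < \<tau> / 2"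
    and "real M \<le> exp (2 * real N * (\<tau> - 2 * \<rho>)) * (1 - exp (-2)) / (2 * exp 2)"
    and "0 < s" and "s < 1"
    and "l \<in> {1..M}"
    and "pm1_vec N xh"
    and "real (hamming N xh (mem l)) \<le> \<rho> * real N"
    and "i < N"
  shows
    "let xt = flip_coord i xh;
         W = gauss_space N r;
         \<Delta> = (\<lambda>\<omega>. E_rand s N r \<omega> M mem xt - E_rand s N r \<omega> M mem xh);
         V1 = (\<Sum>\<mu>1\<in>{1..M}. \<Sum>\<mu>2\<in>{1..M}. Psi s N (\<lambda>j. mem \<mu>1 j + mem \<mu>2 j + 2 * xh j));
         V2 = (\<Sum>\<mu>1\<in>{1..M}. \<Sum>\<mu>2\<in>{1..M}. Psi s N (\<lambda>j. mem \<mu>1 j + mem \<mu>2 j + 2 * xt j));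
         V3 = (\<Sum>\<mu>1\<in>{1..M}. \<Sum>\<mu>2\<in>{1..M}. Psi s N (\<lambda>j. mem \<mu>1 j + mem \<mu>2 j + xh j + xt j));
         V4 = (\<Sum>\<mu>1\<in>{1..M}. \<Sum>\<mu>2\<in>{1..M}. exp (dotN N (mem \<mu>1) xh) * exp (dotN N (mem \<mu>2) xh));
         V5 = (\<Sum>\<mu>1\<in>{1..M}. \<Sum>\<mu>2\<in>{1..M}. exp (dotN N (mem \<mu>1) xt) * exp (dotN N (mem \<mu>2) xt));
         V6 = (\<Sum>\<mu>1\<in>{1..M}. \<Sum>\<mu>2\<in>{1..M}. exp (dotN N (mem \<mu>1) xh) * exp (dotN N (mem \<mu>2) xt))
     in (xh i = mem l i \<longrightarrow> expect W \<Delta> > 0)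
      \<and> (xh i = - mem l i \<longrightarrow> expect W \<Delta> < 0)
      \<and> var W \<Delta> = (1 / real r) * (V1 + V2 - 2 * V3 - V4 - V5 + 2 * V6)"
proof -
  define xt where "xt = flip_coord i xh"
  note setting = assms(10,11,4,13) pm1_vec_flip_coord[OF assms(13), of i, folded xt_def]
  have \<Delta>: "(\<lambda>\<omega>. E_rand s N r \<omega> M mem xt - E_rand s N r \<omega> M mem xh)
      = (\<lambda>\<omega>. \<Sum>k<r. \<Sum>\<mu>\<in>{1..M}. gap_term s N r mem xh xt k \<mu> \<omega>)"
    by (simp add: E_rand_diff gap_term_def)
  have "real M * exp 2 < exp (2 * real N * (\<tau> - 2 * \<rho>))"
    using assms(9) by (rule capacity_bound_strict)
  then have sgn_mean: "sgn (mean_gap N M mem xh xt) = mem l i * xh i"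
    unfolding mean_gap_def xt_def
    using sgn_sum_exp_dotN_flip_coord assms(4,6,12-15) by blast
  have "mem l i \<in> {1, -1}"
    using assms(4,12,15) unfolding pm1_vec_def by blast
  then have "(xh i = mem l i \<longrightarrow> mean_gap N M mem xh xt > 0) \<and> (xh i = - mem l i \<longrightarrow> mean_gap N M mem xh xt < 0)"
    using sgn_mean by (auto simp: sgn_if split: if_splits)
  moreover note same_row_gap_moment_minus_mean_gap_square[of s N M mem xh xt]
  ultimately show ?thesis
    unfolding Let_def xt_def[symmetric] \<Delta> energy_gap_mean[OF setting assms(3)] energy_gap_var[OF setting]
    by simp
qed

end
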